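(* Let $p$ be a prime and $n\ge 3$. Every covering group $H$ of $\mathrm{UT}_n(\mathbb F_p)$ is a stem group, i.e. $Z(H)\le[H,H]$.
   Context: $\mathrm{UT}_n(\mathbb F_p)$ is the group of upper unitriangular $n\times n$ matrices over $\mathbb F_p$. A covering group of a finite group $G$ is a group $H$ with a subgroup $A\le Z(H)\cap[H,H]$ and $H/A\cong G$, of maximal order among such extensions (equivalently $|A|=|H_2(G,\mathbb Z)|$). *)

theory Defs
  imports "HOL-Algebra.Algebra"
begin

text \<open>Matrices are functions nat => nat => nat, indices 0..n-1, entries in {0..<p}
  (representatives of F_p), and all entries outside the n x n block equal 0.\<close>

definition UT :: "nat \<Rightarrow> nat \<Rightarrow> (nat \<Rightarrow> nat \<Rightarrow> nat) monoid" where
  "UT n p = \<lparr> carrier = {M. (\<forall>i j. M i j < p)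
                          \<and> (\<forall>i j. (n \<le> i \<or> n \<le> j) \<longrightarrow> M i j = 0)
                          \<and> (\<forall>i<n. M i i = 1)
                          \<and> (\<forall>i j. j < i \<longrightarrow> M i j = 0)},
              monoid.mult = (\<lambda>A B i j. if i < n \<and> j < n then (\<Sum>k<n. A i k * B k j) mod p else 0),
              monoid.one = (\<lambda>i j. if i < n \<and> j = i then 1 else 0) \<rparr>"

definition group_center :: "('a, 'b) monoid_scheme \<Rightarrow> 'a set" where
  "group_center H = {z \<in> carrier H. \<forall>x \<in> carrier H. z \<otimes>\<^bsub>H\<^esub> x = x \<otimes>\<^bsub>H\<^esub> z}"

definition stem_extension :: "('c, 'd) monoid_scheme \<Rightarrow> ('a, 'b) monoid_scheme \<Rightarrow> 'a set \<Rightarrow> bool" where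
  "stem_extension G H A \<longleftrightarrow> group H \<and> subgroup A H
      \<and> A \<subseteq> group_center H \<inter> derived H (carrier H)
      \<and> (H Mod A) \<cong> G"

text \<open>Every finite group is isomorphic to a group with carrier in nat,
  so comparing against stem extensions with carrier type nat covers all of them.\<close>
definition covering_group :: "('c, 'd) monoid_scheme \<Rightarrow> ('a, 'b) monoid_scheme \<Rightarrow> bool" where
  "covering_group G H \<longleftrightarrow> finite (carrier H) \<and> (\<exists>A. stem_extension G H A)
      \<and> (\<forall>(K :: nat monoid) B. stem_extension G K B \<and> finite (carrier K) \<longrightarrow> card (carrier K) \<le> card (carrier H))"

end

theory Submission
  imports Defs
begin

text \<open>If A is central and contained in [H,H] with H/A \<cong> G, then a central element of H maps to a
  central element of G; when Z(G) \<le> [G,G], it agrees with a commutator modulo A \<le> [H,H], so it lies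
  in [H,H]. For G = UT_n(F_p) the centre consists of the matrices I + c E_{1n}, and for n \<ge> 3 each of
  them is the commutator of I + c E_{12} and I + E_{2n}.\<close>

lemma (in group) central_subgroup_normal:
  assumes "subgroup A G" and "A \<subseteq> group_center G"
  shows "A \<lhd> G"
proof (rule normal_invI[OF assms(1)])
  fix x h assume x: "x \<in> carrier G" and h: "h \<in> A"
  then have "h \<in> carrier G" and "x \<otimes> h = h \<otimes> x"
    using assms(2) by (auto simp: group_center_def)
  with x h show "x \<otimes> h \<otimes> inv x \<in> A"
    by (simp add: m_assoc)
qed

text \<open>Avoids verifying associativity for UT n p: \<open>iso_imp_img_group\<close> transports the group
  structure with the image of the unit as identity, and a right identity forces the two units to agree.\<close>
lemma group_if_iso_group_right_one:
  assumes "group K" and "K \<cong> G" and "\<one>\<^bsub>G\<^esub> \<in> carrier G"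
    and "\<And>x. x \<in> carrier G \<Longrightarrow> x \<otimes>\<^bsub>G\<^esub> \<one>\<^bsub>G\<^esub> = x"
  shows "group G"
proof -
  obtain f where f: "f \<in> iso K G" using assms(2) unfolding is_iso_def by auto
  let ?G' = "G\<lparr>one := f \<one>\<^bsub>K\<^esub>\<rparr>"
  have G': "group ?G'" by (rule group.iso_imp_img_group[OF assms(1) f])
  have "f \<one>\<^bsub>K\<^esub> \<in> carrier G"
    using f group.is_monoid[OF assms(1)] by (auto simp: iso_def intro: hom_in_carrier)
  then have "f \<one>\<^bsub>K\<^esub> = f \<one>\<^bsub>K\<^esub> \<otimes>\<^bsub>G\<^esub> \<one>\<^bsub>G\<^esub>"
    using assms(4) by simp
  also have "\<dots> = \<one>\<^bsub>G\<^esub>"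
    using monoid.l_one[OF group.is_monoid[OF G'], of "\<one>\<^bsub>G\<^esub>"] assms(3) by simp
  finally have "?G' = G" by simp
  with G' show ?thesis by simp
qed

lemma (in group_hom) surj_hom_center_image:
  assumes "h ` carrier G = carrier H" and "z \<in> group_center G"
  shows "h z \<in> group_center H"
  unfolding group_center_def
proof safe
  have z: "z \<in> carrier G" using assms(2) by (simp add: group_center_def)
  then show "h z \<in> carrier H" by simp
  fix y assume "y \<in> carrier H"
  then obtain x where x: "x \<in> carrier G" "y = h x" using assms(1) by auto
  then have "z \<otimes> x = x \<otimes> z" using assms(2) by (simp add: group_center_def)
  then show "h z \<otimes>\<^bsub>H\<^esub> y = y \<otimes>\<^bsub>H\<^esub> h z"
    using x z by (metis hom_mult)
qed

lemma (in group_hom) center_subset_derived_if_surj_hom: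
  assumes surj: "h ` carrier G = carrier H"
    and ker: "kernel G H h \<subseteq> derived G (carrier G)"
    and H_center: "group_center H \<subseteq> derived H (carrier H)"
  shows "group_center G \<subseteq> derived G (carrier G)"
proof
  fix z assume z: "z \<in> group_center G"
  then have zG: "z \<in> carrier G" by (simp add: group_center_def)
  have "h z \<in> derived H (carrier H)"
    using surj_hom_center_image[OF surj z] H_center by blast
  also have "derived H (carrier H) = h ` derived G (carrier G)"
    using derived_img[of "carrier G"] surj by simp
  finally obtain d where d: "d \<in> derived G (carrier G)" "h z = h d" by auto
  have sub: "subgroup (derived G (carrier G)) G" by (simp add: G.derived_is_subgroup)
  have dG: "d \<in> carrier G" using d(1) subgroup.subset[OF sub] by auto
  have "z \<otimes> inv d \<in> kernel G H h"
    using zG dG d(2) by (simp add: kernel_def)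
  then have "z \<otimes> inv d \<otimes> d \<in> derived G (carrier G)"
    using ker d(1) subgroup.m_closed[OF sub] by blast
  then show "z \<in> derived G (carrier G)"
    using zG dG by (simp add: G.m_assoc)
qed

lemma (in normal) quotient_iso_surj_hom:
  assumes "group K" and "f \<in> iso (G Mod H) K"
  defines "g \<equiv> \<lambda>x. f (H #> x)"
  shows "group_hom G K g" and "g ` carrier G = carrier K" and "kernel G K g = H"
proof -
  have f_hom: "f \<in> hom (G Mod H) K" and f_bij: "bij_betw f (carrier (G Mod H)) (carrier K)"
    using assms(2) by (auto simp: iso_def)
  have "g \<in> hom G K"
    using r_coset_hom_Mod f_hom unfolding g_def hom_def by (auto simp: Pi_def)
  then show hom: "group_hom G K g"
    by (simp add: group_hom_def group_hom_axioms_def assms(1))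
  have cosets: "carrier (G Mod H) = (\<lambda>x. H #> x) ` carrier G"
    by (rule carrier_FactGroup)
  then show "g ` carrier G = carrier K"
    using f_bij unfolding g_def bij_betw_def by (simp add: image_image)
  have f_one: "f H = \<one>\<^bsub>K\<^esub>"
    using hom_one[OF f_hom factorgroup_is_group assms(1)] by simp
  show "kernel G K g = H"
  proof
    show "kernel G K g \<subseteq> H"
    proof
      fix x assume "x \<in> kernel G K g"
      then have x: "x \<in> carrier G" and "f (H #> x) = f H"
        using f_one by (auto simp: kernel_def g_def)
      moreover have "H \<in> carrier (G Mod H)" and "H #> x \<in> carrier (G Mod H)"
        using cosets x coset_mult_one[OF subset] by (auto intro: image_eqI[of H _ \<one>])
      ultimately have "H #> x = H"
        using f_bij by (auto simp: bij_betw_def inj_on_def)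
      then show "x \<in> H" using coset_join1 x subgroup_axioms by blast
    qed
    show "H \<subseteq> kernel G K g"
      using f_one by (auto simp: kernel_def g_def rcos_const)
  qed
qed

lemma stem_extension_center_subset_derived:
  assumes "stem_extension G H A" and "group G"
    and "group_center G \<subseteq> derived G (carrier G)"
  shows "group_center H \<subseteq> derived H (carrier H)"
proof -
  from assms(1) have H: "group H" and A: "subgroup A H"
    and A_sub: "A \<subseteq> group_center H \<inter> derived H (carrier H)" and "(H Mod A) \<cong> G"
    by (auto simp: stem_extension_def)
  then obtain f where f: "f \<in> iso (H Mod A) G" by (auto simp: is_iso_def)
  have "A \<lhd> H" using group.central_subgroup_normal[OF H A] A_sub by blast
  note g = normal.quotient_iso_surj_hom[OF this assms(2) f]
  show ?thesis
    using group_hom.center_subset_derived_if_surj_hom[OF g(1,2)] g(3) A_sub assms(3) by auto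
qed

definition transvection :: "nat \<Rightarrow> nat \<Rightarrow> nat \<Rightarrow> nat \<Rightarrow> nat \<Rightarrow> nat \<Rightarrow> nat" where
  "transvection n a b c = (\<lambda>i j. if i < n \<and> j = i then 1 else if i = a \<and> j = b then c else 0)"

lemma transvection_in_UT:
  assumes "a < b" "b < n" "c < p" "1 < p"
  shows "transvection n a b c \<in> carrier (UT n p)"
  using assms by (auto simp: transvection_def UT_def)

lemma UT_mult_apply:
  "i < n \<Longrightarrow> j < n \<Longrightarrow> (A \<otimes>\<^bsub>UT n p\<^esub> B) i j = (\<Sum>k<n. A i k * B k j) mod p"
  by (simp add: UT_def)

lemma UT_transvection_mult:
  assumes "a < b" "b < n" "i < n" "j < n"
  shows "(transvection n a b c \<otimes>\<^bsub>UT n p\<^esub> Y) i j = (Y i j + (if i = a then c * Y b j else 0)) mod p"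
proof -
  have "(\<Sum>k<n. transvection n a b c i k * Y k j)
      = (\<Sum>k<n. (if k = i then Y i j else 0) + (if k = b then (if i = a then c * Y b j else 0) else 0))"
    using assms by (intro sum.cong) (auto simp: transvection_def)
  then show ?thesis
    using assms by (simp add: UT_mult_apply sum.distrib)
qed

lemma UT_mult_transvection:
  assumes "a < b" "b < n" "i < n" "j < n"
  shows "(Y \<otimes>\<^bsub>UT n p\<^esub> transvection n a b c) i j = (Y i j + (if j = b then Y i a * c else 0)) mod p"
proof -
  have "(\<Sum>k<n. Y i k * transvection n a b c k j)
      = (\<Sum>k<n. (if k = j then Y i j else 0) + (if k = a then (if j = b then Y i a * c else 0) else 0))"
    using assms by (intro sum.cong) (auto simp: transvection_def)
  then show ?thesis
    using assms by (simp add: UT_mult_apply sum.distrib)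
qed

lemma UT_one_in_carrier: "1 < p \<Longrightarrow> \<one>\<^bsub>UT n p\<^esub> \<in> carrier (UT n p)"
  by (auto simp: UT_def)

lemma UT_r_one:
  assumes "Y \<in> carrier (UT n p)"
  shows "Y \<otimes>\<^bsub>UT n p\<^esub> \<one>\<^bsub>UT n p\<^esub> = Y"
proof (intro ext)
  fix i j
  have Y: "Y i j < p" "n \<le> i \<or> n \<le> j \<Longrightarrow> Y i j = 0"
    using assms by (auto simp: UT_def)
  show "(Y \<otimes>\<^bsub>UT n p\<^esub> \<one>\<^bsub>UT n p\<^esub>) i j = Y i j"
  proof (cases "i < n \<and> j < n")
    case True
    then have "(\<Sum>k<n. Y i k * \<one>\<^bsub>UT n p\<^esub> k j) = Y i j"
      by (simp add: UT_def if_distrib[of "(*) _"] cong: if_cong)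
    with True Y show ?thesis by (simp add: UT_mult_apply)
  next
    case False
    with Y show ?thesis by (auto simp: UT_def)
  qed
qed

lemma mod_add_right_eq_imp_zero:
  fixes x y p :: nat
  assumes "(x + y) mod p = x mod p" and "y < p"
  shows "y = 0"
proof -
  have "p dvd y" using assms(1) mod_eq_dvd_iff_nat[of x "x + y" p] by simp
  with assms(2) show ?thesis by (auto dest: nat_dvd_not_less)
qed

lemma UT_center_commute_transvection:
  assumes "Y \<in> group_center (UT n p)" "1 < p" "Suc a < n" "i < n" "j < n"
  shows "(Y i j + (if j = Suc a then Y i a else 0)) mod p
       = (Y i j + (if i = a then Y (Suc a) j else 0)) mod p"
proof -
  have "transvection n a (Suc a) 1 \<in> carrier (UT n p)"
    using transvection_in_UT assms(2,3) by simp
  then have "Y \<otimes>\<^bsub>UT n p\<^esub> transvection n a (Suc a) 1 = transvection n a (Suc a) 1 \<otimes>\<^bsub>UT n p\<^esub> Y"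
    using assms(1) by (simp add: group_center_def)
  then have "(Y \<otimes>\<^bsub>UT n p\<^esub> transvection n a (Suc a) 1) i j = (transvection n a (Suc a) 1 \<otimes>\<^bsub>UT n p\<^esub> Y) i j"
    by simp
  then show ?thesis
    using assms(3-5)
    by (simp add: UT_transvection_mult UT_mult_transvection cong: if_cong split del: if_split)
qed

lemma UT_center_eq_corner_transvection:
  assumes Y: "Y \<in> group_center (UT n p)" and "1 < p" and "2 \<le> n"
  shows "Y = transvection n 0 (n - 1) (Y 0 (n - 1))"
proof (intro ext)
  fix i j
  have "Y \<in> carrier (UT n p)" using Y by (simp add: group_center_def)
  then have Y_lt: "\<And>i j. Y i j < p" and Y_out: "n \<le> i \<or> n \<le> j \<Longrightarrow> Y i j = 0"
    and Y_diag: "i < n \<Longrightarrow> Y i i = 1" and Y_low: "j < i \<Longrightarrow> Y i j = 0"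
    by (auto simp: UT_def)
  have Y_off_corner: "Y i j = 0" if "i < j" "j < n" "\<not> (i = 0 \<and> j = n - 1)"
  proof (cases "j < n - 1")
    case True
    have "(Y i (Suc j) + Y i j) mod p = Y i (Suc j) mod p"
      using UT_center_commute_transvection[OF Y \<open>1 < p\<close>, of j i "Suc j"] that True by simp
    then show ?thesis using mod_add_right_eq_imp_zero Y_lt by blast
  next
    case False
    with that have "0 < i" "j = n - 1" by auto
    then have "(Y (i - 1) j + Y i j) mod p = Y (i - 1) j mod p"
      using UT_center_commute_transvection[OF Y \<open>1 < p\<close>, of "i - 1" "i - 1" j] that by simp
    then show ?thesis using mod_add_right_eq_imp_zero Y_lt by blast
  qed
  show "Y i j = transvection n 0 (n - 1) (Y 0 (n - 1)) i j"
  proof (cases "i < j \<and> j < n \<and> \<not> (i = 0 \<and> j = n - 1)")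
    case True
    with Y_off_corner show ?thesis by (auto simp: transvection_def)
  next
    case False
    then consider "n \<le> i \<or> n \<le> j" | "j < i" | "i = j" "i < n" | "i = 0" "j = n - 1" "j < n"
      by linarith
    then show ?thesis
      using Y_out Y_diag Y_low \<open>2 \<le> n\<close> by cases (auto simp: transvection_def)
  qed
qed

text \<open>That is, I + c E_{0,n-1} = [I + c E_{01}, I + E_{1,n-1}].\<close>
lemma UT_corner_transvection_mult_commute:
  assumes "1 < p" "3 \<le> n" "c < p"
  defines "A \<equiv> transvection n 0 1 c" and "B \<equiv> transvection n 1 (n - 1) 1"
  shows "transvection n 0 (n - 1) c \<otimes>\<^bsub>UT n p\<^esub> (B \<otimes>\<^bsub>UT n p\<^esub> A) = A \<otimes>\<^bsub>UT n p\<^esub> B"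
proof (intro ext)
  fix i j
  show "(transvection n 0 (n - 1) c \<otimes>\<^bsub>UT n p\<^esub> (B \<otimes>\<^bsub>UT n p\<^esub> A)) i j = (A \<otimes>\<^bsub>UT n p\<^esub> B) i j"
  proof (cases "i < n \<and> j < n")
    case True
    have BA: "(B \<otimes>\<^bsub>UT n p\<^esub> A) k j = (A k j + (if k = 1 then A (n - 1) j else 0)) mod p"
      if "k < n" for k
      using True that assms(2) by (simp add: B_def UT_transvection_mult)
    have "(transvection n 0 (n - 1) c \<otimes>\<^bsub>UT n p\<^esub> (B \<otimes>\<^bsub>UT n p\<^esub> A)) i j
        = ((B \<otimes>\<^bsub>UT n p\<^esub> A) i j + (if i = 0 then c * (B \<otimes>\<^bsub>UT n p\<^esub> A) (n - 1) j else 0)) mod p"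
      using True assms(2) by (simp add: UT_transvection_mult)
    moreover have "(A \<otimes>\<^bsub>UT n p\<^esub> B) i j = (B i j + (if i = 0 then c * B 1 j else 0)) mod p"
      using True assms(2) by (simp add: A_def UT_transvection_mult)
    ultimately show ?thesis
      using True assms(1-3) BA
      by (auto simp: A_def B_def transvection_def mod_add_left_eq)
  next
    case False
    then show ?thesis by (auto simp: UT_def)
  qed
qed

lemma UT_group_if_iso:
  assumes "group K" and "K \<cong> UT n p" and "1 < p"
  shows "group (UT n p)"
  using group_if_iso_group_right_one[OF assms(1,2)] UT_one_in_carrier[OF assms(3)] UT_r_one
  by blast

lemma UT_center_subset_derived:
  assumes "group (UT n p)" and "1 < p" and "3 \<le> n"
  shows "group_center (UT n p) \<subseteq> derived (UT n p) (carrier (UT n p))"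
proof
  interpret G: group "UT n p" by (rule assms(1))
  fix Y assume Y: "Y \<in> group_center (UT n p)"
  define c where "c = Y 0 (n - 1)"
  have c_lt: "c < p" using Y by (auto simp: group_center_def UT_def c_def)
  let ?A = "transvection n 0 1 c" and ?B = "transvection n 1 (n - 1) 1"
    and ?Z = "transvection n 0 (n - 1) c"
  have A: "?A \<in> carrier (UT n p)" and B: "?B \<in> carrier (UT n p)" and Z: "?Z \<in> carrier (UT n p)"
    using transvection_in_UT assms(2,3) c_lt by auto
  have "?Z = (?A \<otimes>\<^bsub>UT n p\<^esub> ?B) \<otimes>\<^bsub>UT n p\<^esub> inv\<^bsub>UT n p\<^esub> (?B \<otimes>\<^bsub>UT n p\<^esub> ?A)"
    using G.inv_solve_right A B Z UT_corner_transvection_mult_commute[OF assms(2,3) c_lt] by simp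
  also have "\<dots> = ?A \<otimes>\<^bsub>UT n p\<^esub> ?B \<otimes>\<^bsub>UT n p\<^esub> inv\<^bsub>UT n p\<^esub> ?A \<otimes>\<^bsub>UT n p\<^esub> inv\<^bsub>UT n p\<^esub> ?B"
    using A B by (simp add: G.inv_mult_group G.m_assoc)
  finally have "?Z \<in> derived_set (UT n p) (carrier (UT n p))"
    using A B by blast
  then have "?Z \<in> derived (UT n p) (carrier (UT n p))"
    unfolding derived_def by (rule generate.incl)
  then show "Y \<in> derived (UT n p) (carrier (UT n p))"
    using UT_center_eq_corner_transvection[OF Y assms(2)] assms(3) by (simp add: c_def)
qed

theorem mainTheorem14:
  fixes p n :: nat and H :: "('a, 'b) monoid_scheme"
  assumes "Factorial_Ring.prime p" and "n \<ge> 3" and "covering_group (UT n p) H"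
  shows "group_center H \<subseteq> derived H (carrier H)"
proof -
  obtain A where stem: "stem_extension (UT n p) H A"
    using assms(3) by (auto simp: covering_group_def)
  then have H: "group H" and A: "subgroup A H" and "A \<subseteq> group_center H"
    and iso: "H Mod A \<cong> UT n p"
    by (auto simp: stem_extension_def)
  then have "A \<lhd> H" by (simp add: group.central_subgroup_normal)
  have p: "1 < p" using assms(1) prime_gt_1_nat by blast
  have UT: "group (UT n p)"
    using UT_group_if_iso[OF normal.factorgroup_is_group[OF \<open>A \<lhd> H\<close>] iso p] .
  show ?thesis
    using stem_extension_center_subset_derived[OF stem UT UT_center_subset_derived[OF UT p assms(2)]] .
qed

end
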